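(* Let $O_1,\dots,O_m\subset\mathbb{R}^2$ be nonempty, closed, convex obstacles with $\eta:=\min_{i\neq l} d(O_i,O_l)$ satisfying $\eta>2(r+\rho_{\max})$, and let $0<\epsilon<\tfrac12\left[\eta-2(r+\rho_{\max})\right]$. Let $x\in\mathbb{R}^2$ satisfy $0<\delta(x)<\epsilon$, and let $j$ be the (unique) index of the obstacle nearest to $x$. Then: (i) $x$ lies in the interior of the wall following local free space $\mathcal{LF}_w(x)=\mathcal{LF}(x)\cap\mathcal{D}_w(x)$; (ii) $\mathcal{LF}_w(x)=\mathcal{D}_w(x)\cap H_j(x)$, where $H_j(x)=\{q\in\mathbb{R}^2:\ (q-x_h(x))\cdot n_w(x)\ge 0\}$ with $x_h(x)=x-\tfrac12\delta(x)\,n_w(x)$; (iii) the point $x_p(x)$ lies on the boundary of $\mathcal{LF}_w(x)$.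
   Context: Setting: a disk-shaped robot of radius $r>0$ centered at $x\in\mathbb{R}^2$; $\rho_{\max}>0$ is the largest radius among the movable disk-shaped objects. $d(A,B)=\inf\{\|a-b\|: a\in A, b\in B\}$, $d(x,A)=d(\{x\},A)$, and $\Pi_A(x)$ is the (unique) nearest point of a closed convex set $A$ to $x$. Define $\delta(x):=\min_i d(x,O_i)-r$ (this equals the distance $d(x,\partial\mathcal F)$ from $x$ to the boundary of the free space $\mathcal F=\{x: d(x,O_i)\ge r\ \forall i\}$ when $x\in\mathcal F$; it is also the LIDAR quantity $\min_\theta\rho_x(\theta)-r$ when the sensing range is large enough). For $x\notin O_i$ let $n_i(x):=(x-\Pi_{O_i}(x))/\|x-\Pi_{O_i}(x)\|$ and $d_i:=d(x,O_i)$, and define the half-plane $H_i(x):=\{q:\ (q-x+\tfrac12(d_i-r)n_i(x))\cdot n_i(x)\ge 0\}$ (the max-margin separating half-plane between the robot disk and $O_i$, eroded by $r$). The local free space is $\mathcal{LF}(x):=\bigcap_{i=1}^m H_i(x)$ (a convex set). When the nearest obstacle $O_j$ to $x$ is unique, set $n_w(x):=n_j(x)$, $t_w(x):=J n_w(x)$ with $J=\begin{bmatrix}0&-1\\1&0\end{bmatrix}$, $x_{\mathrm{offset}}(x):=x-\delta(x)\,n_w(x)$, the offset disk $\mathcal D_w(x):=\{p:\|p-x_{\mathrm{offset}}(x)\|\le\epsilon\}$, the wall following local free space $\mathcal{LF}_w(x):=\mathcal{LF}(x)\cap\mathcal D_w(x)$, and, for a fixed direction parameter $a\in\{-1,1\}$,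 the wall following goal $x_p(x):=x_{\mathrm{offset}}(x)+\tfrac{\epsilon}{2}n_w(x)+a\tfrac{\epsilon\sqrt3}{2}t_w(x)$. *)

theory Defs
  imports "HOL-Analysis.Analysis"
begin

type_synonym pt = "real \<times> real"

text \<open>Obstacles are Obs 0, ..., Obs (m-1). Robot radius r.\<close>

definition Jrot :: "pt \<Rightarrow> pt" where
  "Jrot v = (- snd v, fst v)"

definition delta :: "(nat \<Rightarrow> pt set) \<Rightarrow> nat \<Rightarrow> real \<Rightarrow> pt \<Rightarrow> real" where
  "delta Obs m r x = Min ((\<lambda>i. infdist x (Obs i)) ` {..<m}) - r"

definition nvec :: "pt set \<Rightarrow> pt \<Rightarrow> pt" where
  "nvec A x = (1 / norm (x - closest_point A x)) *\<^sub>R (x - closest_point A x)"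

definition Hplane :: "pt set \<Rightarrow> real \<Rightarrow> pt \<Rightarrow> pt set" where
  "Hplane A r x = {q. (q - x + ((infdist x A - r) / 2) *\<^sub>R nvec A x) \<bullet> nvec A x \<ge> 0}"

definition LF :: "(nat \<Rightarrow> pt set) \<Rightarrow> nat \<Rightarrow> real \<Rightarrow> pt \<Rightarrow> pt set" where
  "LF Obs m r x = (\<Inter>i\<in>{..<m}. Hplane (Obs i) r x)"

text \<open>j is the index of the nearest obstacle.\<close>

definition x_offset :: "(nat \<Rightarrow> pt set) \<Rightarrow> nat \<Rightarrow> real \<Rightarrow> nat \<Rightarrow> pt \<Rightarrow> pt" where
  "x_offset Obs m r j x = x - delta Obs m r x *\<^sub>R nvec (Obs j) x"

definition Dw :: "(nat \<Rightarrow> pt set) \<Rightarrow> nat \<Rightarrow> real \<Rightarrow> real \<Rightarrow> nat \<Rightarrow> pt \<Rightarrow> pt set" where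
  "Dw Obs m r \<epsilon> j x = cball (x_offset Obs m r j x) \<epsilon>"

definition LFw :: "(nat \<Rightarrow> pt set) \<Rightarrow> nat \<Rightarrow> real \<Rightarrow> real \<Rightarrow> nat \<Rightarrow> pt \<Rightarrow> pt set" where
  "LFw Obs m r \<epsilon> j x = LF Obs m r x \<inter> Dw Obs m r \<epsilon> j x"

definition x_p :: "(nat \<Rightarrow> pt set) \<Rightarrow> nat \<Rightarrow> real \<Rightarrow> real \<Rightarrow> real \<Rightarrow> nat \<Rightarrow> pt \<Rightarrow> pt" where
  "x_p Obs m r \<epsilon> a j x = x_offset Obs m r j x + (\<epsilon> / 2) *\<^sub>R nvec (Obs j) x
      + (a * \<epsilon> * sqrt 3 / 2) *\<^sub>R Jrot (nvec (Obs j) x)"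

end

theory Submission
  imports Defs
begin

text \<open>
  Let \<open>p\<^sub>i\<close> be the closest point of \<open>O\<^sub>i\<close> to \<open>x\<close> and \<open>d\<^sub>i = d(x, O\<^sub>i)\<close>. Membership of
  \<open>q\<close> in \<open>H\<^sub>i(x)\<close> is equivalent to \<open>\<parallel>q - p\<^sub>i\<parallel>\<^sup>2 - \<parallel>q - x\<parallel>\<^sup>2 \<ge> r d\<^sub>i\<close>. The offset disk
  is centred at distance \<open>\<delta>\<close> from \<open>x\<close> towards \<open>O\<^sub>j\<close>, and cutting it with \<open>H\<^sub>j(x)\<close> leaves only
  points with \<open>\<parallel>q - x\<parallel> \<le> \<epsilon>\<close> and \<open>\<parallel>q - p\<^sub>j\<parallel> \<le> r + \<epsilon>\<close>. For \<open>i \<noteq> j\<close> the separation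
  \<open>\<parallel>p\<^sub>i - p\<^sub>j\<parallel> > 2(r + \<epsilon>)\<close> then gives \<open>\<parallel>q - p\<^sub>i\<parallel> > r + \<epsilon>\<close>, which forces the inequality
  above, so every half-plane other than \<open>H\<^sub>j(x)\<close> is redundant in \<open>LF\<^sub>w(x)\<close>. The point
  \<open>x\<close> lies at distance \<open>\<delta>/2\<close> inside the cutting line and \<open>\<epsilon> - \<delta>\<close> inside the circle, while
  \<open>x\<^sub>p\<close> lies on the circle and in \<open>H\<^sub>j(x)\<close>.
\<close>

lemma norm_sq_gap_ge:
  fixes q x p :: "'a::real_normed_vector"
  assumes r: "0 \<le> r" and qx: "norm (q - x) \<le> \<epsilon>" and qp: "r + \<epsilon> < norm (q - p)"
  shows "r * norm (x - p) \<le> (norm (q - p))\<^sup>2 - (norm (q - x))\<^sup>2"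
proof -
  define A B d where "A = norm (q - p)" and "B = norm (q - x)" and "d = norm (x - p)"
  have "d \<le> A + B"
    unfolding A_def B_def d_def using norm_triangle_ineq4[of "q - p" "q - x"] by simp
  moreover have B2: "B\<^sup>2 \<le> \<epsilon>\<^sup>2"
    unfolding B_def using qx by (intro power_mono) auto
  moreover have "0 \<le> B" unfolding B_def by simp
  moreover have "0 \<le> \<epsilon>" using qx norm_ge_zero order_trans by blast
  ultimately consider "d \<le> r + 2 * \<epsilon>" | "r + 2 * \<epsilon> < d" "d - \<epsilon> \<le> A"
    using qx B_def by fastforce
  then show ?thesis
  proof cases
    case 1
    have "(r + \<epsilon>)\<^sup>2 \<le> A\<^sup>2" using qp r \<open>0 \<le> \<epsilon>\<close> unfolding A_def
      by (intro power_mono) auto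
    moreover have "r * d \<le> r * (r + 2 * \<epsilon>)" using 1 r by (simp add: mult_left_mono)
    ultimately show ?thesis using B2 unfolding A_def B_def d_def
      by (simp add: power2_eq_square algebra_simps)
  next
    case 2
    have "(d - \<epsilon>)\<^sup>2 \<le> A\<^sup>2" using 2 r \<open>0 \<le> \<epsilon>\<close> by (intro power_mono) auto
    moreover have "r * d \<le> (d - 2 * \<epsilon>) * d" using 2 r \<open>0 \<le> \<epsilon>\<close> by (intro mult_right_mono) auto
    ultimately show ?thesis using B2 unfolding A_def B_def d_def
      by (simp add: power2_eq_square algebra_simps)
  qed
qed

lemma infdist_eq_norm_closest_point:
  assumes "closed S" "S \<noteq> {}"
  shows "infdist x S = norm (x - closest_point S x)"
  using setdist_closest_point[OF assms, of x] by (simp add: infdist_eq_setdist dist_norm)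

lemma nvec_eq_closest_point:
  assumes "closed S" "S \<noteq> {}"
  shows "nvec S x = (1 / infdist x S) *\<^sub>R (x - closest_point S x)"
  unfolding nvec_def infdist_eq_norm_closest_point[OF assms] ..

lemma norm_nvec:
  assumes "closed S" "S \<noteq> {}" "0 < infdist x S"
  shows "norm (nvec S x) = 1"
  using assms by (simp add: nvec_eq_closest_point infdist_eq_norm_closest_point)

lemma diff_closest_point_eq_nvec:
  assumes "closed S" "S \<noteq> {}" "0 < infdist x S"
  shows "x - closest_point S x = infdist x S *\<^sub>R nvec S x"
  using assms by (simp add: nvec_eq_closest_point)

lemma Hplane_iff_norm_sq:
  assumes S: "closed S" "S \<noteq> {}" and "0 < infdist x S"
  shows "q \<in> Hplane S r x \<longleftrightarrow>
    r * infdist x S \<le> (norm (q - closest_point S x))\<^sup>2 - (norm (q - x))\<^sup>2"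
proof -
  define p d where "p = closest_point S x" and "d = infdist x S"
  have d: "0 < d" "d = norm (x - p)"
    using assms infdist_eq_norm_closest_point[OF S] unfolding p_def d_def by auto
  have expand: "(u + ((d - r) / 2) *\<^sub>R ((1 / d) *\<^sub>R w)) \<bullet> ((1 / d) *\<^sub>R w)
      = (1 / d) * (u \<bullet> w) + (d - r) / 2 * (1 / d) * (1 / d) * (w \<bullet> w)" for u w :: pt
    by (simp add: inner_add_left add_divide_distrib)
  have cross: "(q - x) \<bullet> (x - p) = ((norm (q - p))\<^sup>2 - (norm (q - x))\<^sup>2 - d\<^sup>2) / 2"
    using dot_norm[of "q - x" "x - p"] d by simp
  have sq: "(x - p) \<bullet> (x - p) = d\<^sup>2" using d by (simp add: power2_norm_eq_inner)
  have "(q - x + ((d - r) / 2) *\<^sub>R nvec S x) \<bullet> nvec S x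
      = ((norm (q - p))\<^sup>2 - (norm (q - x))\<^sup>2 - r * d) / (2 * d)"
    using d(1) unfolding nvec_eq_closest_point[OF S] p_def[symmetric] d_def[symmetric] expand cross sq
    by (simp add: field_simps power2_eq_square)
  then show ?thesis
    using d unfolding Hplane_def p_def d_def by (simp add: zero_le_divide_iff)
qed

lemma norm_diff_le_if_in_offset_disk_halfplane:
  fixes q x n :: "'a::real_inner"
  assumes n: "norm n = 1" and "0 \<le> \<delta>"
    and disk: "q \<in> cball (x - \<delta> *\<^sub>R n) \<epsilon>" and half: "0 \<le> (q - (x - (\<delta> / 2) *\<^sub>R n)) \<bullet> n"
  shows "norm (q - x) \<le> \<epsilon>"
proof -
  define u where "u = q - (x - \<delta> *\<^sub>R n)"
  have nn: "n \<bullet> n = 1" using n by (simp add: norm_eq_1)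
  have u: "norm u \<le> \<epsilon>" using disk unfolding u_def by (simp add: dist_norm norm_minus_commute)
  have "\<delta> / 2 \<le> u \<bullet> n"
    using half unfolding u_def by (simp add: algebra_simps inner_diff_left nn)
  then have "\<delta> * \<delta> \<le> \<delta> * (2 * (u \<bullet> n))"
    using \<open>0 \<le> \<delta>\<close> by (intro mult_left_mono) auto
  then have "\<delta>\<^sup>2 \<le> 2 * \<delta> * (u \<bullet> n)" by (simp add: power2_eq_square)
  moreover have "(norm (q - x))\<^sup>2 = (norm u)\<^sup>2 - 2 * \<delta> * (u \<bullet> n) + \<delta>\<^sup>2"
    unfolding u_def power2_norm_eq_inner
    by (simp add: inner_diff_left inner_diff_right nn inner_commute power2_eq_square algebra_simps)
  moreover have "(norm u)\<^sup>2 \<le> \<epsilon>\<^sup>2" using u by (intro power_mono) auto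
  ultimately have "(norm (q - x))\<^sup>2 \<le> \<epsilon>\<^sup>2" by linarith
  then show ?thesis using u norm_ge_zero order_trans power2_le_imp_le by blast
qed

lemma interior_offset_disk_halfplane:
  fixes x n :: "'a::{real_inner, perfect_space}"
  assumes n: "norm n = 1" and "0 < \<delta>" "\<delta> < \<epsilon>"
  shows "x \<in> interior (cball (x - \<delta> *\<^sub>R n) \<epsilon> \<inter> {q. 0 \<le> (q - (x - (\<delta> / 2) *\<^sub>R n)) \<bullet> n})"
proof -
  have half: "{q. 0 \<le> (q - (x - (\<delta> / 2) *\<^sub>R n)) \<bullet> n} = {q. n \<bullet> (x - (\<delta> / 2) *\<^sub>R n) \<le> n \<bullet> q}"
    by (auto simp: inner_diff_right inner_commute)
  have "n \<noteq> 0" using n by auto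
  moreover have "n \<bullet> (x - (\<delta> / 2) *\<^sub>R n) < n \<bullet> x"
    using n \<open>0 < \<delta>\<close> by (simp add: inner_diff_right norm_eq_1)
  moreover have "x \<in> ball (x - \<delta> *\<^sub>R n) \<epsilon>"
    using n assms by (simp add: dist_norm)
  ultimately show ?thesis unfolding interior_Int half by simp
qed

lemma in_frontier_if_on_sphere:
  fixes c :: "'a::{real_normed_vector, perfect_space}"
  assumes "y \<in> S" "S \<subseteq> cball c \<epsilon>" "dist c y = \<epsilon>"
  shows "y \<in> frontier S"
proof -
  have "interior S \<subseteq> ball c \<epsilon>" using interior_mono[OF assms(2)] by simp
  then show ?thesis using assms closure_subset unfolding frontier_def by auto
qed

lemma norm_scaleR_add_scaleR_Jrot:
  assumes "norm n = 1"
  shows "norm (s *\<^sub>R n + t *\<^sub>R Jrot n) = sqrt (s\<^sup>2 + t\<^sup>2)"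
proof -
  obtain n1 n2 where "n = (n1, n2)" by fastforce
  with assms have "n1\<^sup>2 + n2\<^sup>2 = 1" by (simp add: norm_Pair)
  moreover have "(s * n1 - t * n2)\<^sup>2 + (s * n2 + t * n1)\<^sup>2 = (s\<^sup>2 + t\<^sup>2) * (n1\<^sup>2 + n2\<^sup>2)"
    by algebra
  ultimately have "(s * n1 - t * n2)\<^sup>2 + (s * n2 + t * n1)\<^sup>2 = s\<^sup>2 + t\<^sup>2" by simp
  then show ?thesis using \<open>n = (n1, n2)\<close> by (simp add: Jrot_def norm_Pair)
qed

lemma wall_following_goal_in_frontier:
  fixes x n :: pt
  assumes n: "norm n = 1" and "\<delta> \<le> \<epsilon>" "0 \<le> \<epsilon>" and a: "a\<^sup>2 = 1"
  defines "c \<equiv> x - \<delta> *\<^sub>R n"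
  defines "y \<equiv> c + (\<epsilon> / 2) *\<^sub>R n + (a * \<epsilon> * sqrt 3 / 2) *\<^sub>R Jrot n"
  shows "y \<in> frontier (cball c \<epsilon> \<inter> {q. 0 \<le> (q - (x - (\<delta> / 2) *\<^sub>R n)) \<bullet> n})"
proof (rule in_frontier_if_on_sphere)
  have "(\<epsilon> / 2)\<^sup>2 + (a * \<epsilon> * sqrt 3 / 2)\<^sup>2 = \<epsilon>\<^sup>2"
    using a by (simp add: power2_eq_square power_mult_distrib field_simps)
  then show on_sphere: "dist c y = \<epsilon>"
    using norm_scaleR_add_scaleR_Jrot[OF n] \<open>0 \<le> \<epsilon>\<close> unfolding dist_commute[of c] y_def by (simp add: dist_norm add.assoc)
  have "Jrot n \<bullet> n = 0" by (cases n) (simp add: Jrot_def)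
  then have "(y - (x - (\<delta> / 2) *\<^sub>R n)) \<bullet> n = (\<epsilon> - \<delta>) / 2"
    using n unfolding y_def c_def by (simp add: inner_add_left inner_diff_left norm_eq_1 field_simps)
  with \<open>\<delta> \<le> \<epsilon>\<close> on_sphere show "y \<in> cball c \<epsilon> \<inter> {q. 0 \<le> (q - (x - (\<delta> / 2) *\<^sub>R n)) \<bullet> n}"
    by simp
qed blast

lemma mem_Hplane_if_far_from_closest_point:
  assumes "closed S" "S \<noteq> {}" "0 < infdist x S"
    and "0 \<le> r" "norm (q - x) \<le> \<epsilon>" "r + \<epsilon> < norm (q - closest_point S x)"
  shows "q \<in> Hplane S r x"
  using Hplane_iff_norm_sq[OF assms(1-3)] norm_sq_gap_ge[OF assms(4-6)]
  by (simp add: infdist_eq_norm_closest_point[OF assms(1,2)])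

lemma delta_eq_infdist_nearest:
  assumes "j < m" "\<And>i. i < m \<Longrightarrow> infdist x (Obs j) \<le> infdist x (Obs i)"
  shows "delta Obs m r x = infdist x (Obs j) - r"
proof -
  have "Min ((\<lambda>i. infdist x (Obs i)) ` {..<m}) = infdist x (Obs j)"
    using assms by (intro Min_eqI) auto
  then show ?thesis unfolding delta_def by simp
qed

lemma Hplane_nearest_eq:
  assumes "j < m" "\<And>i. i < m \<Longrightarrow> infdist x (Obs j) \<le> infdist x (Obs i)"
  shows "Hplane (Obs j) r x =
    {q. 0 \<le> (q - (x - (delta Obs m r x / 2) *\<^sub>R nvec (Obs j) x)) \<bullet> nvec (Obs j) x}"
proof -
  have "delta Obs m r x = infdist x (Obs j) - r" using assms by (rule delta_eq_infdist_nearest)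
  then show ?thesis unfolding Hplane_def by (simp only:) (simp add: algebra_simps)
qed

lemma LFw_eq_Dw_inter_Hplane_nearest:
  assumes obs: "\<And>i. i < m \<Longrightarrow> Obs i \<noteq> {} \<and> closed (Obs i)"
    and sep: "\<And>i. i < m \<Longrightarrow> i \<noteq> j \<Longrightarrow> 2 * r + 2 * \<epsilon> < setdist (Obs i) (Obs j)"
    and "0 \<le> r" and j: "j < m" and nearest: "\<And>i. i < m \<Longrightarrow> infdist x (Obs j) \<le> infdist x (Obs i)"
    and "0 < delta Obs m r x"
  shows "LFw Obs m r \<epsilon> j x = Dw Obs m r \<epsilon> j x \<inter> Hplane (Obs j) r x"
proof
  show "LFw Obs m r \<epsilon> j x \<subseteq> Dw Obs m r \<epsilon> j x \<inter> Hplane (Obs j) r x"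
    unfolding LFw_def LF_def using j by blast
  define \<delta> n pj where "\<delta> = delta Obs m r x" and "n = nvec (Obs j) x"
    and "pj = closest_point (Obs j) x"
  have "\<delta> = infdist x (Obs j) - r"
    unfolding \<delta>_def using j nearest by (rule delta_eq_infdist_nearest)
  then have dj: "infdist x (Obs j) = r + \<delta>" by simp
  have Sj: "closed (Obs j)" "Obs j \<noteq> {}" using obs[OF j] by auto
  have dj_pos: "0 < infdist x (Obs j)" using dj \<open>0 \<le> r\<close> \<open>0 < delta Obs m r x\<close> \<delta>_def by linarith
  have n: "norm n = 1" unfolding n_def using Sj dj_pos by (rule norm_nvec)
  have xpj: "x - pj = (r + \<delta>) *\<^sub>R n"
    unfolding pj_def n_def diff_closest_point_eq_nvec[OF Sj dj_pos] dj ..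
  show "Dw Obs m r \<epsilon> j x \<inter> Hplane (Obs j) r x \<subseteq> LFw Obs m r \<epsilon> j x"
  proof
    fix q assume q: "q \<in> Dw Obs m r \<epsilon> j x \<inter> Hplane (Obs j) r x"
    have disk: "q \<in> cball (x - \<delta> *\<^sub>R n) \<epsilon>"
      using q unfolding Dw_def x_offset_def \<delta>_def n_def by blast
    have "0 \<le> (q - (x - (\<delta> / 2) *\<^sub>R n)) \<bullet> n"
      using q Hplane_nearest_eq[of j m x Obs, OF j nearest] unfolding \<delta>_def n_def by blast
    then have qx: "norm (q - x) \<le> \<epsilon>"
      using \<open>0 < delta Obs m r x\<close> \<delta>_def norm_diff_le_if_in_offset_disk_halfplane[OF n _ disk]
      by auto
    have "q - pj = (q - (x - \<delta> *\<^sub>R n)) + r *\<^sub>R n" using xpj by (simp add: algebra_simps)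
    then have "norm (q - pj) \<le> norm (q - (x - \<delta> *\<^sub>R n)) + norm (r *\<^sub>R n)"
      by (simp only: norm_triangle_ineq)
    moreover have "norm (q - (x - \<delta> *\<^sub>R n)) \<le> \<epsilon>" using disk by (simp add: dist_norm norm_minus_commute)
    ultimately have qpj: "norm (q - pj) \<le> \<epsilon> + r" using n \<open>0 \<le> r\<close> by simp
    have "q \<in> Hplane (Obs i) r x" if i: "i < m" "i \<noteq> j" for i
    proof (rule mem_Hplane_if_far_from_closest_point)
      show "closed (Obs i)" "Obs i \<noteq> {}" using obs[OF i(1)] by auto
      show "0 \<le> r" by fact
      show "norm (q - x) \<le> \<epsilon>" by (fact qx)
      show "0 < infdist x (Obs i)" using nearest[OF i(1)] dj_pos by linarith
      define pI where "pI = closest_point (Obs i) x"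
      have "setdist (Obs i) (Obs j) \<le> dist pI pj"
        unfolding pI_def pj_def using obs i j by (intro setdist_le_dist closest_point_in_set) auto
      also have "\<dots> \<le> norm (q - pI) + norm (q - pj)"
        using norm_triangle_ineq4[of "q - pj" "q - pI"] by (simp add: dist_norm norm_minus_commute)
      finally show "r + \<epsilon> < norm (q - closest_point (Obs i) x)"
        using sep[OF i] qpj unfolding pI_def by linarith
    qed
    with q show "q \<in> LFw Obs m r \<epsilon> j x" unfolding LFw_def LF_def by blast
  qed
qed

theorem lemma1:
  fixes Obs :: "nat \<Rightarrow> pt set" and m :: nat and r \<rho>max \<epsilon> a :: real
    and x :: pt and j :: nat
  assumes "m \<ge> 1"
    and obs: "\<And>i. i < m \<Longrightarrow> Obs i \<noteq> {} \<and> closed (Obs i) \<and> convex (Obs i)"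
    and r: "r > 0" and \<rho>: "\<rho>max > 0"
    and "\<And>i l. i < m \<Longrightarrow> l < m \<Longrightarrow> i \<noteq> l \<Longrightarrow> setdist (Obs i) (Obs l) > 2 * (r + \<rho>max)"
    and \<epsilon>: "\<epsilon> > 0"
    and \<epsilon>_sep: "\<And>i l. i < m \<Longrightarrow> l < m \<Longrightarrow> i \<noteq> l \<Longrightarrow>
           \<epsilon> < (setdist (Obs i) (Obs l) - 2 * (r + \<rho>max)) / 2"
    and a: "a \<in> {-1, 1}"
    and \<delta>_pos: "0 < delta Obs m r x" and \<delta>_lt: "delta Obs m r x < \<epsilon>"
    and j: "j < m" and nearest: "\<And>i. i < m \<Longrightarrow> infdist x (Obs j) \<le> infdist x (Obs i)"
  shows "x \<in> interior (LFw Obs m r \<epsilon> j x) \<and>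
    LFw Obs m r \<epsilon> j x = Dw Obs m r \<epsilon> j x \<inter>
           {q. (q - (x - (delta Obs m r x / 2) *\<^sub>R nvec (Obs j) x)) \<bullet> nvec (Obs j) x \<ge> 0} \<and>
    x_p Obs m r \<epsilon> a j x \<in> frontier (LFw Obs m r \<epsilon> j x)"
proof -
  define \<delta> n where "\<delta> = delta Obs m r x" and "n = nvec (Obs j) x"
  have sep: "2 * r + 2 * \<epsilon> < setdist (Obs i) (Obs j)" if "i < m" "i \<noteq> j" for i
    using \<rho> \<epsilon>_sep[OF that(1) j that(2)] by (simp add: field_simps)
  have H: "Hplane (Obs j) r x = {q. 0 \<le> (q - (x - (\<delta> / 2) *\<^sub>R n)) \<bullet> n}"
    unfolding \<delta>_def n_def using j nearest by (rule Hplane_nearest_eq)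
  have Dw: "Dw Obs m r \<epsilon> j x = cball (x - \<delta> *\<^sub>R n) \<epsilon>"
    unfolding Dw_def x_offset_def \<delta>_def n_def ..
  have LFw: "LFw Obs m r \<epsilon> j x = cball (x - \<delta> *\<^sub>R n) \<epsilon> \<inter> {q. 0 \<le> (q - (x - (\<delta> / 2) *\<^sub>R n)) \<bullet> n}"
    using LFw_eq_Dw_inter_Hplane_nearest[OF _ sep _ j nearest \<delta>_pos] obs r unfolding Dw H by auto
  have "0 < infdist x (Obs j)"
    using r \<delta>_pos delta_eq_infdist_nearest[of j m x Obs r, OF j nearest] by simp
  then have n: "norm n = 1" using obs[OF j] norm_nvec n_def by blast
  have "a\<^sup>2 = 1" using a by auto
  then have "x_p Obs m r \<epsilon> a j x \<in> frontier (LFw Obs m r \<epsilon> j x)"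
    using wall_following_goal_in_frontier[OF n, of \<delta> \<epsilon> a x] \<epsilon> \<delta>_lt
    unfolding LFw x_p_def x_offset_def \<delta>_def n_def by simp
  moreover have "x \<in> interior (LFw Obs m r \<epsilon> j x)"
    unfolding LFw using interior_offset_disk_halfplane[OF n] \<delta>_pos \<delta>_lt \<delta>_def by simp
  ultimately show ?thesis using LFw unfolding Dw \<delta>_def n_def by simp
qed

end
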